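(* Let $(X,S_b)$ be an $S_b$-metric space with $b\geq 1$, let $x_1,x_2\in X$, and let $f:X\to X$ be a self-mapping for which there exist $\alpha\in(0,1)$ and a non-decreasing function $\varphi:(0,\infty)\to(1,\infty)$ such that for all $x\in X\setminus\{x_1,x_2\}$, $$S_b(x,x,fx)>0 \implies \varphi\big(S_b(x,x,fx)\big)\leq \big[\varphi\big(S_b(x,x,x_1)+S_b(x,x,x_2)\big)\big]^{\alpha}$$ (i.e. $f$ is a Jleli-Samet type $E_{x_1,x_2}$-$S_b$-contraction). Let $$r=\inf\{S_b(x,x,fx): x\neq fx,\ x\in X\}.$$ If $fx_1=x_1$ and $fx_2=x_2$, then $f$ fixes the ellipse $E^{S_b}_r(x_1,x_2)=\{x\in X: S_b(x,x,x_1)+S_b(x,x,x_2)=r\}$, i.e. $fx=x$ for every $x\in E^{S_b}_r(x_1,x_2)$.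
   Context: An $S_b$-metric space $(X,S_b)$ with constant $b\geq 1$ is a nonempty set $X$ with a function $S_b:X\times X\times X\to[0,\infty)$ such that for all $x,y,z,a\in X$: (1) $S_b(x,y,z)=0$ if and only if $x=y=z$; (2) $S_b(x,y,z)\leq b[S_b(x,x,a)+S_b(y,y,a)+S_b(z,z,a)]$. A mapping $f$ fixes a set $\mathcal{F}\subseteq X$ if $\mathcal{F}$ is contained in the fixed point set $\{x\in X: fx=x\}$. *)

theory Defs
  imports Complex_Main
begin

definition Sb_metric :: "'a set \<Rightarrow> ('a \<Rightarrow> 'a \<Rightarrow> 'a \<Rightarrow> real) \<Rightarrow> real \<Rightarrow> bool" where
  "Sb_metric X S b \<longleftrightarrow> b \<ge> 1 \<and>
     (\<forall>x\<in>X. \<forall>y\<in>X. \<forall>z\<in>X. S x y z \<ge> 0) \<and>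
     (\<forall>x\<in>X. \<forall>y\<in>X. \<forall>z\<in>X. S x y z = 0 \<longleftrightarrow> x = y \<and> y = z) \<and>
     (\<forall>x\<in>X. \<forall>y\<in>X. \<forall>z\<in>X. \<forall>a\<in>X. S x y z \<le> b * (S x x a + S y y a + S z z a))"

definition Sb_ellipse :: "'a set \<Rightarrow> ('a \<Rightarrow> 'a \<Rightarrow> 'a \<Rightarrow> real) \<Rightarrow> real \<Rightarrow> 'a \<Rightarrow> 'a \<Rightarrow> 'a set" where
  "Sb_ellipse X S r x1 x2 = {x \<in> X. S x x x1 + S x x x2 = r}"

definition fixes_set :: "('a \<Rightarrow> 'a) \<Rightarrow> 'a set \<Rightarrow> bool" where
  "fixes_set f F \<longleftrightarrow> (\<forall>x\<in>F. f x = x)"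

end

theory Submission
  imports Defs
begin

text \<open>A point x of the ellipse that f moves lies off the foci, so the contractive condition
  applies to it; since r is a lower bound of the displacements and \<phi> is non-decreasing,
  \<phi> r \<le> \<phi> (S x x (f x)) \<le> (\<phi> r) powr \<alpha> < \<phi> r, using \<phi> r > 1 and \<alpha> < 1.\<close>

lemma Sb_metric_nonneg:
  assumes "Sb_metric X S b" and "x \<in> X" "y \<in> X" "z \<in> X"
  shows "0 \<le> S x y z"
  using assms by (auto simp: Sb_metric_def)

lemma Sb_metric_pos:
  assumes "Sb_metric X S b" and "x \<in> X" "y \<in> X" and "x \<noteq> y"
  shows "0 < S x x y"
proof -
  have "S x x y \<noteq> 0" using assms by (auto simp: Sb_metric_def)
  with Sb_metric_nonneg[OF assms(1,2,2,3)] show ?thesis by linarith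
qed

lemma Sb_metric_Inf_displacement_le:
  assumes "Sb_metric X S b" and "f ` X \<subseteq> X" and "x \<in> X" and "x \<noteq> f x"
  shows "Inf {S y y (f y) | y. y \<in> X \<and> y \<noteq> f y} \<le> S x x (f x)"
proof (rule cInf_lower)
  show "S x x (f x) \<in> {S y y (f y) | y. y \<in> X \<and> y \<noteq> f y}" using assms(3,4) by auto
  show "bdd_below {S y y (f y) | y. y \<in> X \<and> y \<noteq> f y}"
    using Sb_metric_nonneg[OF assms(1)] assms(2) by (intro bdd_belowI[of _ 0]) blast
qed

lemma powr_less_self:
  fixes a \<alpha> :: real
  assumes "1 < a" and "\<alpha> < 1"
  shows "a powr \<alpha> < a"
  using powr_less_mono[OF assms(2,1)] assms(1) by simp

theorem theorem2p8:
  fixes X :: "'a set" and S :: "'a \<Rightarrow> 'a \<Rightarrow> 'a \<Rightarrow> real" and b :: real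
    and f :: "'a \<Rightarrow> 'a" and x1 x2 :: 'a and \<alpha> :: real and \<phi> :: "real \<Rightarrow> real"
  assumes "Sb_metric X S b"
    and "x1 \<in> X" and "x2 \<in> X"
    and "f ` X \<subseteq> X"
    and "0 < \<alpha>" and "\<alpha> < 1"
    and "\<forall>t>0. \<phi> t > 1"
    and "\<forall>s>0. \<forall>t\<ge>s. \<phi> s \<le> \<phi> t"
    and "\<forall>x\<in>X - {x1, x2}. S x x (f x) > 0 \<longrightarrow>
           \<phi> (S x x (f x)) \<le> (\<phi> (S x x x1 + S x x x2)) powr \<alpha>"
    and "r = Inf {S x x (f x) | x. x \<in> X \<and> x \<noteq> f x}"
    and "f x1 = x1" and "f x2 = x2"
  shows "fixes_set f (Sb_ellipse X S r x1 x2)"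
  unfolding fixes_set_def
proof (intro ballI, rule ccontr)
  fix x assume "x \<in> Sb_ellipse X S r x1 x2" and moved: "f x \<noteq> x"
  then have x: "x \<in> X" and on_ellipse: "S x x x1 + S x x x2 = r"
    by (auto simp: Sb_ellipse_def)
  have off_foci: "x \<noteq> x1" "x \<noteq> x2" using moved assms(11,12) by auto
  have displacement_pos: "0 < S x x (f x)"
    using Sb_metric_pos[OF assms(1) x _ moved[symmetric]] assms(4) x by blast
  have r_pos: "0 < r"
    using on_ellipse Sb_metric_pos[OF assms(1) x assms(2) off_foci(1)]
      Sb_metric_nonneg[OF assms(1) x x assms(3)] by linarith
  have "r \<le> S x x (f x)"
    using Sb_metric_Inf_displacement_le[OF assms(1,4) x moved[symmetric]] assms(10) by simp
  then have "\<phi> r \<le> \<phi> (S x x (f x))" using assms(8) r_pos by blast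
  also have "\<dots> \<le> (\<phi> r) powr \<alpha>"
    using assms(9) x off_foci displacement_pos on_ellipse by auto
  also have "\<dots> < \<phi> r" using powr_less_self assms(6,7) r_pos by blast
  finally show False by simp
qed

end
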